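(* Let $f\in C^1[0,1]$ with $f(0)=0$, $h:=f'$, $q$ satisfying (q), and assume that $q$ is (left-)differentiable at $1$ with $\dot q(1)\in(-\infty,0]$. Let $c\ge c^*$ and let $z$ be a solution of $(P_c)$. Then the left derivative $\dot z(1)=\lim_{\varphi\to1^-}\frac{z(\varphi)-z(1)}{\varphi-1}$ exists, and: (i) if $z(1)<0$, then $\dot z(1)=h(1)-c$; (ii) if $z(1)=0$, then $\dot z(1)=\frac12\big[h(1)-c+\sqrt{(h(1)-c)^2-4\dot q(1)}\big]$ when $\dot q(1)<0$, and $\dot z(1)=\max\{0,h(1)-c\}$ when $\dot q(1)=0$.
   Context: Condition (q): $q\in C[0,1]$, $q>0$ on $(0,1)$, $q(0)=q(1)=0$, and $\limsup_{\varphi\to0^+}q(\varphi)/\varphi<+\infty$. For $c\in\mathbb R$, a solution of problem $(P_c)$ is a function $z\in C[0,1]\cap C^1(0,1)$ with $\dot z(\varphi)=h(\varphi)-c-q(\varphi)/z(\varphi)$ and $z(\varphi)<0$ for all $\varphi\in(0,1)$, and $z(0)=0$. $c^*$ denotes the real number such that $(P_c)$ has a solution with $z(1)=0$ iff $c\ge c^*$. *)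

theory Defs
  imports "HOL-Analysis.Analysis" "HOL-Library.Liminf_Limsup"
begin

definition cond_q :: "(real \<Rightarrow> real) \<Rightarrow> bool" where
  "cond_q q \<longleftrightarrow> continuous_on {0..1} q \<and> (\<forall>x\<in>{0<..<1}. q x > 0) \<and> q 0 = 0 \<and> q 1 = 0
     \<and> Limsup (at_right 0) (\<lambda>x. ereal (q x / x)) < \<infinity>"

definition sol_P :: "(real \<Rightarrow> real) \<Rightarrow> (real \<Rightarrow> real) \<Rightarrow> real \<Rightarrow> (real \<Rightarrow> real) \<Rightarrow> bool" where
  "sol_P h q c z \<longleftrightarrow> continuous_on {0..1} z
     \<and> (\<forall>x\<in>{0<..<1}. (z has_real_derivative (h x - c - q x / z x)) (at x))
     \<and> continuous_on {0<..<1} (deriv z)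
     \<and> (\<forall>x\<in>{0<..<1}. z x < 0) \<and> z 0 = 0"

end

theory Submission
  imports Defs
begin

text \<open>At an end point where \<open>z(1) < 0\<close> the right-hand side \<open>h - c - q/z\<close> of the equation
  extends continuously to \<open>h(1) - c\<close>, and the left derivative follows from L'Hospital's rule.
  At an end point where \<open>z(1) = 0\<close> the slope \<open>z(x)/(x - 1)\<close> is trapped by comparison with
  lines \<open>\<lambda>(x - 1)\<close>: since \<open>q(x) \<approx> -\<dot>q(1)(1 - x)\<close>, along such a line the equation has slope
  \<open>\<approx> h(1) - c - \<dot>q(1)/\<lambda>\<close>, which is below \<open>\<lambda>\<close> exactly when \<open>\<lambda>\<close> exceeds the positive root of
  \<open>\<lambda>\<^sup>2 - (h(1) - c)\<lambda> + \<dot>q(1)\<close>. Hence \<open>z\<close> cannot cross steeper lines from above nor flatter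
  ones from below near \<open>1\<close>, and the slope converges to that root.\<close>

lemma tendsto_difference_quotient_at_left:
  fixes z z' :: "real \<Rightarrow> real"
  assumes "(z \<longlongrightarrow> z a) (at_left a)"
    and "\<forall>\<^sub>F x in at_left a. (z has_real_derivative z' x) (at x)"
    and "(z' \<longlongrightarrow> l) (at_left a)"
  shows "((\<lambda>x. (z x - z a) / (x - a)) \<longlongrightarrow> l) (at_left a)"
proof (rule lhopital_left[where f' = z' and g' = "\<lambda>_. 1"])
  show "((\<lambda>x. z x - z a) \<longlongrightarrow> 0) (at_left a)"
    using tendsto_diff[OF assms(1) tendsto_const[of "z a"]] by simp
  show "((\<lambda>x. x - a) \<longlongrightarrow> 0) (at_left a)"
    using tendsto_diff[OF tendsto_ident_at[of a "{..<a}"] tendsto_const[of a]] by simp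
  show "\<forall>\<^sub>F x in at_left a. x - a \<noteq> 0"
    by (auto simp: eventually_at_filter)
  show "\<forall>\<^sub>F x in at_left a. ((\<lambda>x. z x - z a) has_real_derivative z' x) (at x)"
    using assms(2) by eventually_elim (auto intro!: derivative_eq_intros)
  show "\<forall>\<^sub>F x in at_left a. ((\<lambda>x. x - a) has_real_derivative 1) (at x)"
    by (rule always_eventually) (auto intro!: derivative_eq_intros)
  show "((\<lambda>x. z' x / 1) \<longlongrightarrow> l) (at_left a)"
    using assms(3) by simp
qed simp

lemma tendsto_ratio_at_left_of_left_deriv:
  fixes q :: "real \<Rightarrow> real"
  assumes "(q has_real_derivative d) (at_left a)" and "q a = 0"
  shows "((\<lambda>x. q x / (a - x)) \<longlongrightarrow> - d) (at_left a)"
proof -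
  have "((\<lambda>x. - ((q x - q a) / (x - a))) \<longlongrightarrow> - d) (at_left a)"
    using assms(1) by (intro tendsto_minus) (simp add: has_field_derivative_iff)
  then show ?thesis using assms(2) by (simp add: minus_divide_right)
qed

lemma above_line_if_slower_below_line:
  fixes z z' :: "real \<Rightarrow> real"
  assumes x0: "x0 < 1" and cz: "continuous_on {x0..1} z" and z1: "z 1 = 0"
    and dz: "\<And>x. x0 < x \<Longrightarrow> x < 1 \<Longrightarrow> (z has_real_derivative z' x) (at x)"
    and slower: "\<And>x. x0 < x \<Longrightarrow> x < 1 \<Longrightarrow> z x < lam * (x - 1) \<Longrightarrow> z' x < lam"
  shows "lam * (x0 - 1) \<le> z x0"
proof (rule ccontr)
  assume crossed: "\<not> ?thesis"
  define g where "g x = z x - lam * (x - 1)" for x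
  have g_x0: "g x0 < 0" using crossed by (simp add: g_def)
  have cg: "continuous_on {x0..1} g" unfolding g_def by (intro continuous_intros cz)
  define S where "S = {x0..1} \<inter> g -` {0..}"
  have "closed S" unfolding S_def by (rule continuous_closed_preimage[OF cg]) auto
  moreover have "1 \<in> S" using x0 z1 by (auto simp: S_def g_def)
  moreover have bdd: "bdd_below S" unfolding S_def by (rule bdd_belowI[of _ x0]) auto
  ultimately have "Inf S \<in> S" using closed_contains_Inf by blast
  define x1 where "x1 = Inf S"
  have g_x1: "g x1 \<ge> 0" and x01: "x0 < x1" "x1 \<le> 1"
    using \<open>Inf S \<in> S\<close> g_x0 by (auto simp: S_def x1_def le_less)
  have below: "g x < 0" if "x0 \<le> x" "x < x1" for x
    using cInf_lower[OF _ bdd, of x] that x01 by (force simp: S_def x1_def)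
  have dg: "(g has_real_derivative z' x - lam) (at x)" if "x0 < x" "x < 1" for x
    unfolding g_def using dz[OF that] by (auto intro!: derivative_eq_intros)
  obtain l w where w: "x0 < w" "w < x1" "(g has_real_derivative l) (at w)"
      and mvt: "g x1 - g x0 = (x1 - x0) * l"
    using MVT[OF x01(1), of g] continuous_on_subset[OF cg] dg x01
    by (fastforce simp: real_differentiable_def)
  have "l = z' w - lam" using DERIV_unique[OF w(3) dg] w x01 by simp
  moreover have "z' w < lam" using below[of w] slower[of w] w x01 by (simp add: g_def)
  ultimately have "(x1 - x0) * l < 0" using x01 by (simp add: mult_pos_neg)
  with mvt g_x0 g_x1 show False by simp
qed

lemma below_line_if_faster_above_line:
  fixes z z' :: "real \<Rightarrow> real"
  assumes "x0 < 1" and "continuous_on {x0..1} z" and "z 1 = 0"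
    and "\<And>x. x0 < x \<Longrightarrow> x < 1 \<Longrightarrow> (z has_real_derivative z' x) (at x)"
    and "\<And>x. x0 < x \<Longrightarrow> x < 1 \<Longrightarrow> lam * (x - 1) < z x \<Longrightarrow> lam < z' x"
  shows "z x0 \<le> lam * (x0 - 1)"
  using above_line_if_slower_below_line[of x0 "\<lambda>x. - z x" "\<lambda>x. - z' x" "- lam"] assms
  by (auto intro!: continuous_intros derivative_eq_intros)

lemma abs_le_sqrt_sq_add_nonneg:
  fixes a p :: real
  assumes "p \<ge> 0"
  shows "\<bar>a\<bar> \<le> sqrt (a\<^sup>2 + p)"
  using real_sqrt_le_mono[of "a\<^sup>2" "a\<^sup>2 + p"] assms by simp

lemma quadratic_sign_around_positive_root:
  fixes a p lam :: real
  assumes p: "p \<ge> 0" and lam: "lam > 0"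
  defines "L \<equiv> (a + sqrt (a\<^sup>2 + 4 * p)) / 2"
  shows "lam > L \<Longrightarrow> a + p / lam < lam" and "lam < L \<Longrightarrow> lam < a + p / lam"
proof -
  define s where "s = sqrt (a\<^sup>2 + 4 * p)"
  have "s\<^sup>2 = a\<^sup>2 + 4 * p" using p by (simp add: s_def)
  then have factor: "lam * (lam - (a + p / lam)) = (lam - L) * (lam - (a - s) / 2)"
    using lam by (simp add: L_def s_def field_simps power2_eq_square)
  have "\<bar>a\<bar> \<le> s" unfolding s_def using p by (intro abs_le_sqrt_sq_add_nonneg) simp
  then have other_root: "lam - (a - s) / 2 > 0" using lam by simp
  show "a + p / lam < lam" if "lam > L"
  proof -
    have "lam * (lam - (a + p / lam)) > 0" using that other_root by (simp add: factor)
    with lam show ?thesis by (simp add: zero_less_mult_iff)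
  qed
  show "lam < a + p / lam" if "lam < L"
  proof -
    have "lam * (lam - (a + p / lam)) < 0" using that other_root by (simp add: factor mult_neg_pos)
    with lam show ?thesis by (simp add: mult_less_0_iff)
  qed
qed

context
  fixes g q z :: "real \<Rightarrow> real" and a p :: real
  assumes cz: "continuous_on {0..1} z" and z1: "z 1 = 0"
    and zneg: "\<And>x. x \<in> {0<..<1} \<Longrightarrow> z x < 0"
    and qpos: "\<And>x. x \<in> {0<..<1} \<Longrightarrow> q x > 0"
    and dz: "\<And>x. x \<in> {0<..<1} \<Longrightarrow> (z has_real_derivative g x - q x / z x) (at x)"
    and g_lim: "(g \<longlongrightarrow> a) (at_left 1)"
    and q_lim: "((\<lambda>x. q x / (1 - x)) \<longlongrightarrow> p) (at_left 1)"
begin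

text \<open>Along the line \<open>\<lambda>(x - 1)\<close> the equation has slope \<open>g(x) + q(x)/((1 - x)\<lambda>)\<close>.\<close>

lemma line_slope_tendsto:
  assumes "lam \<noteq> 0"
  shows "((\<lambda>x. g x + q x / (1 - x) / lam) \<longlongrightarrow> a + p / lam) (at_left 1)"
  using assms by (intro tendsto_intros g_lim q_lim)

lemma eventually_slope_le:
  assumes lam: "lam > 0" and "a + p / lam < lam"
  shows "\<forall>\<^sub>F x in at_left 1. z x / (x - 1) \<le> lam"
proof -
  have "\<forall>\<^sub>F x in at_left 1. x \<in> {0<..<1} \<and> g x + q x / (1 - x) / lam < lam"
    using order_tendstoD(2)[OF line_slope_tendsto assms(2)] lam
    by (intro eventually_conj eventually_at_left_real) auto
  then obtain b where "b < 1"
      and b: "\<And>x. b < x \<Longrightarrow> x < 1 \<Longrightarrow> x \<in> {0<..<1} \<and> g x + q x / (1 - x) / lam < lam"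
    unfolding eventually_at_left_field by auto
  show ?thesis
  proof (rule eventually_at_leftI[OF _ \<open>b < 1\<close>])
    fix x0 assume x0: "x0 \<in> {b<..<1}"
    have "lam * (x0 - 1) \<le> z x0"
    proof (rule above_line_if_slower_below_line[where z' = "\<lambda>x. g x - q x / z x"])
      show "continuous_on {x0..1} z"
        using b[of x0] x0 by (auto intro: continuous_on_subset[OF cz])
      fix x assume x: "x0 < x" "x < 1"
      then have x01: "x \<in> {0<..<1}" and bound: "g x + q x / (1 - x) / lam < lam"
        using b[of x] x0 by auto
      show "(z has_real_derivative g x - q x / z x) (at x)" using dz[OF x01] .
      assume "z x < lam * (x - 1)"
      then have "q x / (- z x) < q x / (lam * (1 - x))"
        using qpos[OF x01] zneg[OF x01] x01 lam
        by (intro divide_strict_left_mono) (auto simp: algebra_simps)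
      moreover have "q x / (- z x) = - (q x / z x)" "q x / (lam * (1 - x)) = q x / (1 - x) / lam"
        by simp_all
      ultimately show "g x - q x / z x < lam" using bound by linarith
    qed (use x0 z1 in auto)
    then show "z x0 / (x0 - 1) \<le> lam" using x0 by (simp add: neg_divide_le_eq)
  qed
qed

lemma eventually_slope_ge:
  assumes lam: "lam > 0" and "lam < a + p / lam"
  shows "\<forall>\<^sub>F x in at_left 1. lam \<le> z x / (x - 1)"
proof -
  have "\<forall>\<^sub>F x in at_left 1. x \<in> {0<..<1} \<and> lam < g x + q x / (1 - x) / lam"
    using order_tendstoD(1)[OF line_slope_tendsto assms(2)] lam
    by (intro eventually_conj eventually_at_left_real) auto
  then obtain b where "b < 1"
      and b: "\<And>x. b < x \<Longrightarrow> x < 1 \<Longrightarrow> x \<in> {0<..<1} \<and> lam < g x + q x / (1 - x) / lam"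
    unfolding eventually_at_left_field by auto
  show ?thesis
  proof (rule eventually_at_leftI[OF _ \<open>b < 1\<close>])
    fix x0 assume x0: "x0 \<in> {b<..<1}"
    have "z x0 \<le> lam * (x0 - 1)"
    proof (rule below_line_if_faster_above_line[where z' = "\<lambda>x. g x - q x / z x"])
      show "continuous_on {x0..1} z"
        using b[of x0] x0 by (auto intro: continuous_on_subset[OF cz])
      fix x assume x: "x0 < x" "x < 1"
      then have x01: "x \<in> {0<..<1}" and bound: "lam < g x + q x / (1 - x) / lam"
        using b[of x] x0 by auto
      show "(z has_real_derivative g x - q x / z x) (at x)" using dz[OF x01] .
      assume "lam * (x - 1) < z x"
      then have "q x / (lam * (1 - x)) < q x / (- z x)"
        using qpos[OF x01] zneg[OF x01] x01 lam
        by (intro divide_strict_left_mono) (auto simp: algebra_simps)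
      moreover have "q x / (- z x) = - (q x / z x)" "q x / (lam * (1 - x)) = q x / (1 - x) / lam"
        by simp_all
      ultimately show "lam < g x - q x / z x" using bound by linarith
    qed (use x0 z1 in auto)
    then show "lam \<le> z x0 / (x0 - 1)" using x0 by (simp add: neg_le_divide_eq)
  qed
qed

lemma slope_tendsto_positive_root:
  assumes "p \<ge> 0"
  shows "((\<lambda>x. z x / (x - 1)) \<longlongrightarrow> (a + sqrt (a\<^sup>2 + 4 * p)) / 2) (at_left 1)"
proof -
  define L where "L = (a + sqrt (a\<^sup>2 + 4 * p)) / 2"
  note root = quadratic_sign_around_positive_root[OF assms, of _ a, folded L_def]
  have "L \<ge> 0" using abs_le_sqrt_sq_add_nonneg[of "4 * p" a] assms by (simp add: L_def)
  have "((\<lambda>x. z x / (x - 1)) \<longlongrightarrow> L) (at_left 1)"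
  proof (rule order_tendstoI)
    fix e assume "L < e"
    with \<open>L \<ge> 0\<close> have lam: "(L + e) / 2 > 0" "(L + e) / 2 > L" "(L + e) / 2 < e" by simp_all
    show "\<forall>\<^sub>F x in at_left 1. z x / (x - 1) < e"
      using eventually_slope_le[OF lam(1) root(1)[OF lam(1,2)]]
      by eventually_elim (rule le_less_trans[OF _ lam(3)])
  next
    fix e assume "e < L"
    show "\<forall>\<^sub>F x in at_left 1. e < z x / (x - 1)"
    proof (cases "e \<le> 0")
      case True
      have "0 < z x / (x - 1)" if "x \<in> {0<..<1}" for x
        using zneg[OF that] that by (simp add: divide_neg_neg)
      then have "\<forall>\<^sub>F x in at_left 1. 0 < z x / (x - 1)"
        using eventually_at_left_real[of 0 1] by (auto elim: eventually_mono)
      then show ?thesis by eventually_elim (use True in linarith)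
    next
      case False
      with \<open>e < L\<close> have lam: "(L + e) / 2 > 0" "(L + e) / 2 < L" "e < (L + e) / 2" by simp_all
      show ?thesis
        using eventually_slope_ge[OF lam(1) root(2)[OF lam(1,2)]]
        by eventually_elim (rule less_le_trans[OF lam(3)])
    qed
  qed
  then show ?thesis by (simp add: L_def)
qed

end

theorem proposition7p1:
  fixes f h q z :: "real \<Rightarrow> real" and c cstar dq :: real
  assumes f_deriv: "\<forall>x\<in>{0..1}. (f has_real_derivative h x) (at x within {0..1})"
    and h_cont: "continuous_on {0..1} h"
    and f0: "f 0 = 0"
    and q: "cond_q q"
    and q_left_deriv: "(q has_real_derivative dq) (at_left 1)"
    and dq: "dq \<le> 0"
    and cstar: "\<forall>c'. (\<exists>z'. sol_P h q c' z' \<and> z' 1 = 0) \<longleftrightarrow> c' \<ge> cstar"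
    and c: "c \<ge> cstar"
    and z: "sol_P h q c z"
  shows "\<exists>L. ((\<lambda>x. (z x - z 1) / (x - 1)) \<longlongrightarrow> L) (at_left 1)
           \<and> (z 1 < 0 \<longrightarrow> L = h 1 - c)
           \<and> (z 1 = 0 \<longrightarrow>
                (dq < 0 \<longrightarrow> L = (h 1 - c + sqrt ((h 1 - c)\<^sup>2 - 4 * dq)) / 2)
              \<and> (dq = 0 \<longrightarrow> L = max 0 (h 1 - c)))"
proof -
  from z have cz: "continuous_on {0..1} z" and zneg: "\<And>x. x \<in> {0<..<1} \<Longrightarrow> z x < 0"
    and dz: "\<And>x. x \<in> {0<..<1} \<Longrightarrow> (z has_real_derivative h x - c - q x / z x) (at x)"
    unfolding sol_P_def by auto
  from q have cq: "continuous_on {0..1} q" and qpos: "\<And>x. x \<in> {0<..<1} \<Longrightarrow> q x > 0"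
    and q1: "q 1 = 0" unfolding cond_q_def by auto
  have near_1: "\<forall>\<^sub>F x in at_left 1. x \<in> {0<..<1::real}" by (rule eventually_at_left_real) simp
  have h_lim: "((\<lambda>x. h x - c) \<longlongrightarrow> h 1 - c) (at_left 1)"
    and z_lim: "(z \<longlongrightarrow> z 1) (at_left 1)" and q_lim: "(q \<longlongrightarrow> 0) (at_left 1)"
    using continuous_on_Icc_at_leftD[OF h_cont] continuous_on_Icc_at_leftD[OF cz]
      continuous_on_Icc_at_leftD[OF cq] q1 by (auto intro: tendsto_intros)
  have "\<forall>\<^sub>F x in at_left 1. z x \<le> 0"
    using near_1 by eventually_elim (simp add: zneg less_imp_le)
  then have "z 1 \<le> 0" by (intro tendsto_upperbound[OF z_lim]) simp_all
  then consider "z 1 < 0" | "z 1 = 0" by linarith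
  then show ?thesis
  proof cases
    case 1
    have "((\<lambda>x. h x - c - q x / z x) \<longlongrightarrow> h 1 - c) (at_left 1)"
      using tendsto_diff[OF h_lim tendsto_divide[OF q_lim z_lim]] 1 by simp
    moreover have "\<forall>\<^sub>F x in at_left 1. (z has_real_derivative h x - c - q x / z x) (at x)"
      using near_1 by (rule eventually_mono) (rule dz)
    ultimately have "((\<lambda>x. (z x - z 1) / (x - 1)) \<longlongrightarrow> h 1 - c) (at_left 1)"
      by (intro tendsto_difference_quotient_at_left[OF z_lim])
    with 1 show ?thesis by auto
  next
    case 2
    note q_ratio = tendsto_ratio_at_left_of_left_deriv[OF q_left_deriv q1]
    from slope_tendsto_positive_root[where g = "\<lambda>x. h x - c", OF cz 2 zneg qpos _ h_lim q_ratio]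
    have "((\<lambda>x. (z x - z 1) / (x - 1)) \<longlongrightarrow> (h 1 - c + sqrt ((h 1 - c)\<^sup>2 - 4 * dq)) / 2) (at_left 1)"
      using dz dq 2 by simp
    moreover have "dq = 0 \<Longrightarrow> (h 1 - c + sqrt ((h 1 - c)\<^sup>2 - 4 * dq)) / 2 = max 0 (h 1 - c)"
      by (simp add: max_def)
    ultimately show ?thesis using 2 by auto
  qed
qed

end
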